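(* Let $\beta$ be a totally positive quadratic integer satisfying \[ \operatorname{Tr}\beta \leq \operatorname{Nm}\beta < 2\operatorname{Tr}\beta - 4. \] Then for every integer $n \geq 0$, $p_\beta\big((\operatorname{Tr}\beta)\beta^n\big) = n+1$.
   Context: A quadratic integer is a root of a monic irreducible quadratic polynomial in $\mathbb{Z}[x]$; it is totally positive if both it and its conjugate $\beta'$ are positive real numbers. $\operatorname{Tr}\beta = \beta + \beta'$ and $\operatorname{Nm}\beta = \beta\beta'$. For $\alpha \in \mathbb{C}$, $p_\beta(\alpha) \in \mathbb{Z}_{\geq 0}\cup\{\infty\}$ is the number of polynomials $f \in \mathbb{Z}_{\geq 0}[x]$ (non-negative integer coefficients) with $f(\beta) = \alpha$. *)

theory Defs
  imports Complex_Main "HOL-Computational_Algebra.Polynomial" "HOL-Library.Extended_Nat"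
begin

definition quad_min_poly :: "complex \<Rightarrow> int poly \<Rightarrow> bool" where
  "quad_min_poly \<beta> p \<longleftrightarrow> degree p = 2 \<and> lead_coeff p = 1 \<and> irreducible p
      \<and> poly (map_poly of_int p) \<beta> = 0"

text \<open>For p = x^2 + b x + c: trace = beta + beta' = -b, norm = beta * beta' = c.\<close>
definition quad_tr :: "int poly \<Rightarrow> int" where
  "quad_tr p = - coeff p 1"

definition quad_nm :: "int poly \<Rightarrow> int" where
  "quad_nm p = coeff p 0"

definition quad_conj :: "int poly \<Rightarrow> complex \<Rightarrow> complex" where
  "quad_conj p \<beta> = of_int (quad_tr p) - \<beta>"

definition totally_positive :: "int poly \<Rightarrow> complex \<Rightarrow> bool" where
  "totally_positive p \<beta> \<longleftrightarrow> \<beta> \<in> \<real> \<and> Re \<beta> > 0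
      \<and> quad_conj p \<beta> \<in> \<real> \<and> Re (quad_conj p \<beta>) > 0"

definition rep_count :: "complex \<Rightarrow> complex \<Rightarrow> enat" where
  "rep_count \<beta> \<alpha> =
     (let S = {f :: nat poly. poly (map_poly of_nat f) \<beta> = \<alpha>}
      in if finite S then enat (card S) else \<infinity>)"

end

theory Submission
  imports Defs
begin

text \<open>Write \<open>T = Tr \<beta>\<close> and \<open>M = Nm \<beta>\<close>, so that \<open>\<beta>\<close> is a root of \<open>p = x\<^sup>2 - T x + M\<close>.
  Since \<open>\<beta>\<close> is irrational and \<open>p\<close> is monic, \<open>f \<in> \<nat>[x]\<close> satisfies \<open>f(\<beta>) = T \<beta>\<^sup>n\<close> exactly
  when \<open>f = T x\<^sup>n + p q\<close> for some \<open>q \<in> \<int>[x]\<close>. The inequalities on \<open>T\<close> and \<open>M\<close> make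
  \<open>p = (x - B)(x - b)\<close> with real \<open>0 < b < 2\<close> and \<open>B > b + 2\<close>. Peeling off the factor
  \<open>x - B\<close> from below and \<open>x - b\<close> from above, non-negativity of the coefficients of
  \<open>T x\<^sup>n + (x - B)(x - b) q\<close> forces the integer coefficients of \<open>q\<close> to vanish from
  degree \<open>n\<close> on and to form a non-decreasing \<open>0/1\<close> sequence below it, i.e.
  \<open>q = x\<^bsup>n-j\<^esup> + \<dots> + x\<^bsup>n-1\<^esup>\<close> with \<open>0 \<le> j \<le> n\<close>; as \<open>T \<le> M\<close>, each of these \<open>n + 1\<close>
  choices does give non-negative coefficients.\<close>

lemma map_poly_of_int_add:
  "map_poly (of_int :: int \<Rightarrow> 'a::comm_ring_1) (p + q) = map_poly of_int p + map_poly of_int q"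
  by (rule poly_eqI) (simp add: coeff_map_poly)

lemma map_poly_of_int_diff:
  "map_poly (of_int :: int \<Rightarrow> 'a::comm_ring_1) (p - q) = map_poly of_int p - map_poly of_int q"
  by (rule poly_eqI) (simp add: coeff_map_poly)

lemma map_poly_of_int_mult:
  "map_poly (of_int :: int \<Rightarrow> 'a::comm_ring_1) (p * q) = map_poly of_int p * map_poly of_int q"
  by (induction p) (simp_all add: map_poly_of_int_add map_poly_smult map_poly_pCons)

lemma poly_map_poly_of_int_of_int:
  "poly (map_poly (of_int :: int \<Rightarrow> 'a::comm_ring_1) p) (of_int k) = of_int (poly p k)"
  by (induction p) (simp_all add: map_poly_pCons)

lemma map_poly_of_int_int: "map_poly of_int (map_poly int f) = map_poly of_nat f"
  by (rule poly_eqI) (simp add: coeff_map_poly)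

lemma map_poly_nat_int: "map_poly nat (map_poly int f) = f"
  by (rule poly_eqI) (simp add: coeff_map_poly)

lemma map_poly_int_nat:
  assumes "\<And>k. 0 \<le> coeff g k"
  shows "map_poly int (map_poly nat g) = g"
  by (rule poly_eqI) (simp add: coeff_map_poly assms)

lemma irreducible_imp_no_root:
  fixes p :: "'a::idom_divide poly"
  assumes "irreducible p" "2 \<le> degree p"
  shows "poly p x \<noteq> 0"
proof
  assume "poly p x = 0"
  then obtain r where p: "p = [:-x, 1:] * r"
    by (metis dvdE poly_eq_0_iff_dvd)
  have "\<not> is_unit [:-x, 1:]"
    by (auto simp: is_unit_poly_iff)
  then have "is_unit r"
    using irreducibleD[OF assms(1) p] by blast
  then have "degree p = 1"
    using p by (auto simp: is_unit_poly_iff)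
  with assms(2) show False by simp
qed

lemma coeff_linear_factor_mult:
  fixes g :: "'a::comm_ring_1 poly"
  shows "coeff ([:-a, 1:] * g) k = coeff (pCons 0 g) k - a * coeff g k"
  by simp

lemma coeff_nonpos_below_if_linear_factor:
  fixes g :: "'a::linordered_idom poly"
  assumes a: "0 < a" and low: "\<And>k. k < n \<Longrightarrow> 0 \<le> coeff ([:-a, 1:] * g) k"
  shows "k < n \<Longrightarrow> coeff g k \<le> 0"
proof (induction k)
  case 0
  then show ?case using low[of 0] a by (simp add: coeff_linear_factor_mult mult_le_0_iff)
next
  case (Suc k)
  then have "a * coeff g (Suc k) \<le> 0"
    using low[of "Suc k"] by (simp add: coeff_linear_factor_mult)
  then show ?case using a by (simp add: mult_le_0_iff)
qed

lemma coeff_nonneg_above_if_linear_factor: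
  fixes g :: "'a::linordered_idom poly"
  assumes a: "0 \<le> a" and high: "\<And>k. n < k \<Longrightarrow> 0 \<le> coeff ([:-a, 1:] * g) k"
  shows "n \<le> k \<Longrightarrow> 0 \<le> coeff g k"
proof (induction "Suc (degree g) - k" arbitrary: k)
  case 0
  then show ?case by (simp add: coeff_eq_0)
next
  case (Suc d)
  then have "0 \<le> coeff g (Suc k)" "a * coeff g (Suc k) \<le> coeff g k"
    using high[of "Suc k"] by (simp_all add: coeff_linear_factor_mult)
  then show ?case using a by (meson order_trans zero_le_mult_iff)
qed

definition ones_block :: "nat \<Rightarrow> nat \<Rightarrow> 'a::comm_semiring_1 poly" where
  "ones_block n j = (\<Sum>i\<in>{n - j..<n}. monom 1 i)"

lemma coeff_ones_block:
  "coeff (ones_block n j) k = (if n - j \<le> k \<and> k < n then 1 else 0)"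
  by (simp add: ones_block_def coeff_sum)

lemma inj_on_ones_block:
  "inj_on (ones_block n :: nat \<Rightarrow> 'a::{comm_semiring_1,zero_neq_one} poly) {..n}"
proof (rule inj_onI)
  fix i j assume "i \<in> {..n}" "j \<in> {..n}" "(ones_block n i :: 'a poly) = ones_block n j"
  then have "coeff (ones_block n i :: 'a poly) (n - max i j) = coeff (ones_block n j :: 'a poly) (n - max i j)"
    by simp
  with \<open>i \<in> {..n}\<close> \<open>j \<in> {..n}\<close> show "i = j"
    by (auto simp: coeff_ones_block max_def split: if_splits)
qed

lemma coeff_ones_block_rep_nonneg:
  fixes T M :: "'a::linordered_idom"
  assumes "0 \<le> T" "T \<le> M"
  shows "0 \<le> coeff (monom T n + [:M, -T, 1:] * ones_block n j) k"
  using assms by (auto simp: coeff_pCons coeff_ones_block split: nat.split)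

lemma ones_block_if_coeffs_01_mono:
  fixes q :: "int poly"
  assumes zero: "\<And>k. n \<le> k \<Longrightarrow> coeff q k = 0"
    and bin: "\<And>k. k < n \<Longrightarrow> coeff q k \<in> {0, 1}"
    and mono: "\<And>k. Suc k < n \<Longrightarrow> coeff q k \<le> coeff q (Suc k)"
  shows "\<exists>j\<le>n. q = ones_block n j"
proof -
  define s where "s = (LEAST k. k = n \<or> coeff q k = 1)"
  have "s \<le> n"
    unfolding s_def by (rule Least_le) simp
  have below: "coeff q k = 0" if "k < s" for k
    using not_less_Least[of k "\<lambda>k. k = n \<or> coeff q k = 1"] that bin[of k] \<open>s \<le> n\<close>
    unfolding s_def by auto
  have above: "coeff q k = 1" if "s \<le> k" "k < n" for k
  proof -
    have "s = n \<or> coeff q s = 1"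
      unfolding s_def by (rule LeastI[of _ n]) simp
    then have "coeff q s = 1" using that by auto
    moreover have "coeff q s \<le> coeff q k"
      using that by (induction k rule: dec_induct) (auto intro: order_trans mono)
    ultimately show ?thesis using bin[of k] that(2) by auto
  qed
  have "q = ones_block n (n - s)"
    by (rule poly_eqI) (use below above zero \<open>s \<le> n\<close> in \<open>auto simp: coeff_ones_block\<close>)
  then show ?thesis using diff_le_self by blast
qed

lemma ones_block_if_coeff_ratio_bounded:
  fixes q :: "int poly" and b :: real
  assumes b: "0 < b" "b < 2"
    and ratio: "\<And>k. k < n \<Longrightarrow> of_int (coeff (pCons 0 q) k) \<le> b * of_int (coeff q k)"
    and top: "coeff (pCons 0 q) n \<le> 1"
    and high: "\<And>k. n \<le> k \<Longrightarrow> coeff q k = 0"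
  shows "\<exists>j\<le>n. q = ones_block n j"
proof (rule ones_block_if_coeffs_01_mono[OF high])
  have nonneg: "0 \<le> coeff q k" if "k < n" for k
    using that
  proof (induction k)
    case 0
    then show ?case using ratio[of 0] b by (simp add: zero_le_mult_iff)
  next
    case (Suc k)
    then have "of_int (coeff q k) \<le> b * of_int (coeff q (Suc k))" "0 \<le> coeff q k"
      using ratio[of "Suc k"] by simp_all
    then have "0 \<le> b * of_int (coeff q (Suc k))" by linarith
    then show ?case using b by (simp add: zero_le_mult_iff)
  qed
  have le1: "coeff (pCons 0 q) k \<le> 1" if "k \<le> n" for k
    using that
  proof (induction "n - k" arbitrary: k)
    case 0
    then show ?case using top by simp
  next
    case (Suc d)
    then have "k < n" by simp
    have "coeff (pCons 0 q) (Suc k) \<le> 1"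
      by (rule Suc.hyps(1)) (use Suc.hyps(2) in arith)+
    then have "coeff q k \<le> 1" by simp
    then have "b * of_int (coeff q k) \<le> b"
      using b by (simp add: mult_left_le)
    with \<open>k < n\<close> have "of_int (coeff (pCons 0 q) k) < (2::real)"
      using ratio[of k] b by linarith
    then show ?case by simp
  qed
  show bin: "coeff q k \<in> {0, 1}" if "k < n" for k
    using nonneg[OF that] le1[of "Suc k"] that by auto
  show "coeff q k \<le> coeff q (Suc k)" if "Suc k < n" for k
  proof -
    have "of_int (coeff q k) \<le> b * of_int (coeff q (Suc k))"
      using ratio[of "Suc k"] that by simp
    moreover have "coeff q (Suc k) = 0 \<or> coeff q (Suc k) = 1"
      using bin[of "Suc k"] that by simp
    ultimately show ?thesis using b by force
  qed
qed

lemma coeff_bounds_if_nonneg_coeffs: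
  fixes Q :: "'a::linordered_field poly"
  assumes b: "0 < b" "b < B"
    and nonneg: "\<And>k. 0 \<le> coeff (monom (B + b) n + [:-B, 1:] * [:-b, 1:] * Q) k"
  shows "\<And>k. k < n \<Longrightarrow> coeff (pCons 0 Q) k \<le> b * coeff Q k"
    and "\<And>k. n \<le> k \<Longrightarrow> B * coeff Q k \<le> coeff (pCons 0 Q) k"
    and "\<And>k. n \<le> k \<Longrightarrow> 0 \<le> coeff Q k"
    and "B * (coeff (pCons 0 Q) n - b * coeff Q n) \<le> B + b"
proof -
  define P where "P = [:-B, 1:] * [:-b, 1:] * Q"
  define g where "g = [:-b, 1:] * Q"
  define g' where "g' = [:-B, 1:] * Q"
  have P_eq: "[:-B, 1:] * g = P" "[:-b, 1:] * g' = P"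
    unfolding P_def g_def g'_def by (simp_all only: mult.assoc mult.left_commute)
  have nonneg_P: "0 \<le> coeff (monom (B + b) n + P) k" for k
    using nonneg unfolding P_def .
  have off_n: "0 \<le> coeff P k" if "k \<noteq> n" for k
    using nonneg_P[of k] that by simp
  have g_low: "coeff g k \<le> 0" if "k < n" for k
  proof (rule coeff_nonpos_below_if_linear_factor[OF _ _ that])
    show "0 < B" using b by simp
    show "0 \<le> coeff ([:-B, 1:] * g) k" if "k < n" for k
      unfolding P_eq using off_n that by simp
  qed
  then show "coeff (pCons 0 Q) k \<le> b * coeff Q k" if "k < n" for k
    using that by (simp add: g_def coeff_linear_factor_mult)
  have g'_high: "0 \<le> coeff g' k" if "n \<le> k" for k
  proof (rule coeff_nonneg_above_if_linear_factor[OF _ _ that])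
    show "0 \<le> b" using b by simp
    show "0 \<le> coeff ([:-b, 1:] * g') k" if "n < k" for k
      unfolding P_eq using off_n that by simp
  qed
  then show "B * coeff Q k \<le> coeff (pCons 0 Q) k" if "n \<le> k" for k
    using that by (simp add: g'_def coeff_linear_factor_mult)
  show "0 \<le> coeff Q k" if "n \<le> k" for k
  proof (rule coeff_nonneg_above_if_linear_factor[OF _ _ that])
    show "0 \<le> B" using b by simp
    show "0 \<le> coeff ([:-B, 1:] * Q) k" if "n < k" for k
      unfolding g'_def[symmetric] using g'_high that by simp
  qed
  have "0 \<le> (B + b) + coeff (pCons 0 g) n - B * coeff g n"
    using nonneg_P[of n] by (simp add: P_eq(1)[symmetric] coeff_linear_factor_mult)
  moreover have "coeff (pCons 0 g) n \<le> 0"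
    using g_low by (cases n) simp_all
  ultimately show "B * (coeff (pCons 0 Q) n - b * coeff Q n) \<le> B + b"
    by (simp add: g_def coeff_linear_factor_mult)
qed

lemma ones_block_if_nonneg_coeffs:
  fixes q :: "int poly" and B b :: real
  assumes b: "0 < b" "b < 2" "b + 2 < B"
    and nonneg: "\<And>k. 0 \<le> coeff (monom (B + b) n + [:-B, 1:] * [:-b, 1:] * map_poly of_int q) k"
  shows "\<exists>j\<le>n. q = ones_block n j"
proof -
  define Q :: "real poly" where "Q = map_poly of_int q"
  have coeff_Q: "coeff Q k = of_int (coeff q k)" "coeff (pCons 0 Q) k = of_int (coeff (pCons 0 q) k)"
    for k unfolding Q_def by (simp_all add: coeff_map_poly coeff_pCons split: nat.split)
  have "b < B"
    using b by simp
  note bounds = coeff_bounds_if_nonneg_coeffs[OF b(1) this nonneg[folded Q_def]]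
  have "B * (coeff (pCons 0 Q) n - b * coeff Q n) < B * 2"
    using bounds(4) b by linarith
  then have top: "coeff (pCons 0 Q) n - b * coeff Q n < 2"
    using b by simp
  then have "(B - b) * coeff Q n < B - b"
    using bounds(2)[of n] b by (simp add: algebra_simps)
  then have q_n: "coeff q n = 0"
    using b bounds(3)[of n] by (simp add: coeff_Q)
  have high: "coeff q k = 0" if "n \<le> k" for k
    using that
  proof (induction k rule: dec_induct)
    case base
    show ?case by (rule q_n)
  next
    case (step k)
    then have "B * coeff Q (Suc k) \<le> 0"
      using bounds(2)[of "Suc k"] by (simp add: coeff_Q)
    then show ?case
      using bounds(3)[of "Suc k"] step b by (simp add: coeff_Q mult_le_0_iff)
  qed
  show ?thesis
  proof (rule ones_block_if_coeff_ratio_bounded[OF b(1,2) _ _ high])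
    show "of_int (coeff (pCons 0 q) k) \<le> b * of_int (coeff q k)" if "k < n" for k
      using bounds(1)[OF that] by (simp add: coeff_Q)
    show "coeff (pCons 0 q) n \<le> 1"
      using top q_n by (simp add: coeff_Q)
  qed
qed

lemma quadratic_roots_separated:
  fixes T M :: int
  assumes "T \<le> M" "M < 2 * T - 4"
  obtains B b :: real where "B + b = T" "B * b = M" "0 < b" "b < 2" "b + 2 < B"
proof -
  define D where "D = T\<^sup>2 - 4 * M"
  define s where "s = sqrt (of_int D)"
  have "(T - 4)\<^sup>2 + 4 \<le> D" "D < T\<^sup>2"
    using assms by (simp_all add: D_def power2_eq_square algebra_simps)
  moreover have "1 \<le> (T - 4)\<^sup>2"
    using assms by simp
  ultimately have "(T - 4)\<^sup>2 < D" "4 < D" "D < T\<^sup>2"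
    by linarith+
  then have "of_int ((T - 4)\<^sup>2) < (of_int D :: real)" "of_int (2\<^sup>2) < (of_int D :: real)"
    "of_int D < (of_int (T\<^sup>2) :: real)"
    by (simp_all only: of_int_less_iff) simp
  then have "(of_int T - 4)\<^sup>2 < (of_int D :: real)" "2\<^sup>2 < (of_int D :: real)"
    "of_int D < (of_int T :: real)\<^sup>2"
    by simp_all
  then have s: "of_int T - 4 < s" "2 < s" "s < of_int T"
    using assms unfolding s_def by (auto intro: real_less_rsqrt real_less_lsqrt)
  have "s\<^sup>2 = of_int D"
    using \<open>4 < D\<close> unfolding s_def by simp
  then have "(of_int T + s) / 2 * ((of_int T - s) / 2) = of_int M"
    unfolding D_def by (simp add: field_simps power2_eq_square)
  with s show thesis
    by (intro that[of "(T + s) / 2" "(T - s) / 2"]) (simp_all add: field_simps)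
qed

lemma quad_min_polyD:
  assumes "quad_min_poly \<beta> p"
  shows "degree p = 2" "coeff p 2 = 1" "irreducible p" "poly (map_poly of_int p) \<beta> = 0"
  using assms by (auto simp: quad_min_poly_def)

lemma quad_min_poly_eq:
  assumes "quad_min_poly \<beta> p"
  shows "p = [:quad_nm p, - quad_tr p, 1:]"
proof (rule poly_eqI)
  fix k
  show "coeff p k = coeff [:quad_nm p, - quad_tr p, 1:] k"
    using quad_min_polyD(1,2)[OF assms]
    by (auto simp: quad_nm_def quad_tr_def coeff_pCons coeff_eq_0 numeral_2_eq_2 split: nat.split)
qed

lemma quad_min_poly_root_irrational:
  assumes p: "quad_min_poly \<beta> p" and lin: "of_int a + of_int b * \<beta> = 0"
  shows "a = 0 \<and> b = 0"
proof (cases "b = 0")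
  case False
  have "algebraic_int \<beta>"
    using quad_min_polyD[OF p] by (auto simp: algebraic_int_altdef_ipoly)
  moreover have "\<beta> = - of_int a / of_int b"
    using lin False by (simp add: field_simps add_eq_0_iff)
  then have "\<beta> \<in> \<rat>" by simp
  ultimately obtain k where "\<beta> = of_int k"
    using rational_algebraic_int_is_int Ints_cases by metis
  then have "poly p k = 0"
    using quad_min_polyD(4)[OF p] poly_map_poly_of_int_of_int[where 'a=complex, of p k] by simp
  with quad_min_polyD[OF p] show ?thesis
    by (simp add: irreducible_imp_no_root)
qed (use lin in simp)

lemma quad_min_poly_dvd:
  assumes p: "quad_min_poly \<beta> p" and g: "poly (map_poly of_int g) \<beta> = 0"
  shows "p dvd g"
proof -
  note p_props = quad_min_polyD[OF p]
  then have "p \<noteq> 0" by auto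
  obtain q r where qr: "pseudo_divmod g p = (q, r)"
    by fastforce
  have g_eq: "g = p * q + r"
    using pseudo_divmod(1)[OF \<open>p \<noteq> 0\<close> qr] p_props by simp
  have "degree r \<le> 1"
    using pseudo_divmod(2)[OF \<open>p \<noteq> 0\<close> qr] p_props by auto
  then have r: "r = [:coeff r 0, coeff r 1:]"
    by (intro poly_eqI) (auto simp: coeff_pCons coeff_eq_0 split: nat.split)
  have "poly (map_poly of_int r) \<beta> = 0"
    using g p_props
    by (simp add: g_eq map_poly_of_int_add map_poly_of_int_mult)
  then have "of_int (coeff r 0) + of_int (coeff r 1) * \<beta> = 0"
    by (subst (asm) r) (simp add: map_poly_pCons mult.commute)
  then have "r = 0"
    using quad_min_poly_root_irrational[OF p] r by (metis pCons_0_0)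
  then show ?thesis
    using g_eq by simp
qed

lemma quad_min_poly_solution_iff:
  assumes p: "quad_min_poly \<beta> p"
  shows "poly (map_poly of_nat f) \<beta> = of_int c * \<beta> ^ n \<longleftrightarrow> p dvd map_poly int f - monom c n"
proof
  assume "poly (map_poly of_nat f) \<beta> = of_int c * \<beta> ^ n"
  then show "p dvd map_poly int f - monom c n"
    by (intro quad_min_poly_dvd[OF p])
       (simp add: map_poly_of_int_diff map_poly_of_int_int map_poly_monom poly_monom)
next
  assume "p dvd map_poly int f - monom c n"
  then obtain q where "map_poly int f - monom c n = p * q" ..
  then have "map_poly int f = monom c n + p * q"
    by (simp add: algebra_simps)
  then have "(map_poly of_nat f :: complex poly) = map_poly of_int (monom c n + p * q)"
    by (simp flip: map_poly_of_int_int[where 'a=complex])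
  then show "poly (map_poly of_nat f) \<beta> = of_int c * \<beta> ^ n"
    using quad_min_polyD(4)[OF p]
    by (simp add: map_poly_of_int_add map_poly_of_int_mult map_poly_monom poly_monom)
qed

lemma ones_block_if_dvd:
  assumes p: "quad_min_poly \<beta> p"
    and TM: "quad_tr p \<le> quad_nm p" "quad_nm p < 2 * quad_tr p - 4"
    and dvd: "p dvd map_poly int f - monom (quad_tr p) n"
  shows "\<exists>j\<le>n. map_poly int f = monom (quad_tr p) n + p * ones_block n j"
proof -
  obtain B b :: real where Bb: "B + b = quad_tr p" "B * b = quad_nm p" "0 < b" "b < 2" "b + 2 < B"
    using quadratic_roots_separated TM by metis
  have p_real: "map_poly of_int p = [:-B, 1:] * [:-b, 1:]"
    using Bb by (subst quad_min_poly_eq[OF p]) (simp add: map_poly_pCons algebra_simps)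
  from dvd obtain q where "map_poly int f - monom (quad_tr p) n = p * q" ..
  then have f_eq: "map_poly int f = monom (quad_tr p) n + p * q"
    by (simp add: algebra_simps)
  then have "map_poly of_int (map_poly int f) =
      monom (B + b) n + [:-B, 1:] * [:-b, 1:] * map_poly (of_int :: int \<Rightarrow> real) q"
    using Bb p_real by (simp add: map_poly_of_int_add map_poly_of_int_mult map_poly_monom)
  moreover have "0 \<le> coeff (map_poly of_int (map_poly int f) :: real poly) k" for k
    by (simp add: coeff_map_poly)
  ultimately obtain j where "j \<le> n" "q = ones_block n j"
    using ones_block_if_nonneg_coeffs[of b B n q] Bb by auto
  with f_eq show ?thesis
    by blast
qed

lemma bij_betw_ones_block_representations:
  assumes p: "quad_min_poly \<beta> p"
    and TM: "quad_tr p \<le> quad_nm p" "quad_nm p < 2 * quad_tr p - 4"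
  defines "T \<equiv> quad_tr p"
  shows "bij_betw (\<lambda>j. map_poly nat (monom T n + p * ones_block n j)) {..n}
           {f. poly (map_poly of_nat f) \<beta> = of_int T * \<beta> ^ n}"
proof -
  define M where "M = quad_nm p"
  define F where "F j = monom T n + p * ones_block n j" for j
  have p_eq: "p = [:M, -T, 1:]"
    using quad_min_poly_eq[OF p] by (simp add: T_def M_def)
  have "0 \<le> T" "T \<le> M"
    using TM by (simp_all add: T_def M_def)
  then have F_nat: "map_poly int (map_poly nat (F j)) = F j" for j
    unfolding F_def p_eq by (intro map_poly_int_nat coeff_ones_block_rep_nonneg)
  have "inj_on F {..n}"
    using inj_on_ones_block[where 'a=int] quad_min_polyD(1)[OF p]
    by (auto simp: inj_on_def F_def)
  then have "inj_on (\<lambda>j. map_poly nat (F j)) {..n}"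
    by (metis (mono_tags, lifting) F_nat inj_on_def)
  moreover have "(\<lambda>j. map_poly nat (F j)) ` {..n} = {f. poly (map_poly of_nat f) \<beta> = of_int T * \<beta> ^ n}"
  proof (intro equalityI subsetI)
    fix f assume "f \<in> (\<lambda>j. map_poly nat (F j)) ` {..n}"
    then show "f \<in> {f. poly (map_poly of_nat f) \<beta> = of_int T * \<beta> ^ n}"
      by (auto simp: quad_min_poly_solution_iff[OF p] F_nat) (simp add: F_def)
  next
    fix f assume "f \<in> {f. poly (map_poly of_nat f) \<beta> = of_int T * \<beta> ^ n}"
    then obtain j where "j \<le> n" "map_poly int f = F j"
      using ones_block_if_dvd[OF p TM] unfolding F_def T_def quad_min_poly_solution_iff[OF p]
      by auto
    then have "f = map_poly nat (F j)"
      using map_poly_nat_int[of f] by simp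
    then show "f \<in> (\<lambda>j. map_poly nat (F j)) ` {..n}"
      using \<open>j \<le> n\<close> by auto
  qed
  ultimately show ?thesis
    unfolding bij_betw_def F_def by blast
qed

theorem theorem2:
  fixes \<beta> :: complex and p :: "int poly"
  assumes "quad_min_poly \<beta> p"
    and "totally_positive p \<beta>"
    and "quad_tr p \<le> quad_nm p"
    and "quad_nm p < 2 * quad_tr p - 4"
  shows "\<forall>n::nat. rep_count \<beta> (of_int (quad_tr p) * \<beta> ^ n) = enat (n + 1)"
proof
  fix n
  note bij = bij_betw_ones_block_representations[OF assms(1,3,4), of n]
  show "rep_count \<beta> (of_int (quad_tr p) * \<beta> ^ n) = enat (n + 1)"
    unfolding rep_count_def Let_def
    using bij_betw_finite[OF bij] bij_betw_same_card[OF bij] by simp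
qed

end
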